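(* For all integers $n\ge 2$, $k\ge 1$ and $j\ge 0$, the number of Fine $n$-paths having exactly $j$ short ascents and exactly $k$ long ascents equals \[\frac{1}{n+1}\binom{n-1-k}{k-1}\binom{n-2k}{j}\binom{n+1}{k}.\]
   Context: A Dyck $n$-path is a path from $(0,0)$ to $(2n,0)$ with $n$ upsteps $U=(1,1)$ and $n$ downsteps $D=(1,-1)$ never going below the $x$-axis. A hill is a peak $UD$ whose top vertex is at height $1$; a Fine $n$-path is a Dyck $n$-path with no hills. An ascent is a maximal run of consecutive upsteps; it is short if it has exactly one step and long otherwise. Binomial coefficients with lower index outside $[0,\text{upper}]$ are $0$. *)

theory Defs
  imports Complex_Main
begin

(* A lattice path is a list of steps: True = upstep U=(1,1), False = downstep D=(1,-1). *)

definition height :: "bool list \<Rightarrow> int" where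
  "height xs = int (length (filter id xs)) - int (length (filter Not xs))"

definition dyck_path :: "nat \<Rightarrow> bool list \<Rightarrow> bool" where
  "dyck_path n xs \<longleftrightarrow> length xs = 2 * n \<and> length (filter id xs) = n
     \<and> (\<forall>i \<le> length xs. height (take i xs) \<ge> 0) \<and> height xs = 0"

definition has_hill :: "bool list \<Rightarrow> bool" where
  "has_hill xs \<longleftrightarrow> (\<exists>i. Suc i < length xs \<and> xs ! i \<and> \<not> xs ! Suc i
      \<and> height (take (Suc i) xs) = 1)"

definition fine_path :: "nat \<Rightarrow> bool list \<Rightarrow> bool" where
  "fine_path n xs \<longleftrightarrow> dyck_path n xs \<and> \<not> has_hill xs"

function ascents :: "bool list \<Rightarrow> nat list" where
  "ascents [] = []"
| "ascents (False # xs) = ascents xs"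
| "ascents (True # xs) =
     length (takeWhile id (True # xs)) # ascents (dropWhile id xs)"
  by pat_completeness auto
termination
  by (relation "measure length") (auto simp: le_imp_less_Suc length_dropWhile_le)

definition short_ascents :: "bool list \<Rightarrow> nat" where
  "short_ascents xs = length (filter (\<lambda>m. m = 1) (ascents xs))"

definition long_ascents :: "bool list \<Rightarrow> nat" where
  "long_ascents xs = length (filter (\<lambda>m. m \<ge> 2) (ascents xs))"

definition ibinom :: "int \<Rightarrow> int \<Rightarrow> nat" where
  "ibinom a b = (if 0 \<le> b \<and> b \<le> a then nat a choose nat b else 0)"

end

theory Submission
  imports Defs
begin

(* A Dyck path ending with a downstep factors uniquely as U^c0 D U^c1 D ... U^c(n-1) D, so Fine
   n-paths with j short and k long ascents correspond to sequences c of n naturals summing to n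
   whose levels (heights after each D) stay nonnegative, every part 1 sitting at level >= 1, with
   j parts equal to 1 and k parts >= 2; let F(j) be their number.

   Absorbing a marked part 1 into the last earlier part of lower level is a bijection onto such
   sequences with one part 1 fewer, together with a part c_t and a number 3 <= p <= c_t. Since the
   parts >= 2 have total excess n - j - 2k over 2, this gives (j + 1) F(j + 1) = (n - j - 2k) F(j),
   hence F(j) = F(0) * binom(n - 2k, j).

   Without parts 1 the hill condition is void; appending a 0 gives a Lukasiewicz word of length
   n + 1, and by the cycle lemma exactly one rotation of each word of length n + 1 and sum n is
   Lukasiewicz. Such words with k nonzero parts, all >= 2, number binom(n - k - 1, k - 1) *
   binom(n + 1, k), which yields (n + 1) F(0) = binom(n - k - 1, k - 1) * binom(n + 1, k). *)

section \<open>Compositions and their levels\<close>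

definition level :: "nat list \<Rightarrow> nat \<Rightarrow> int" where
  "level c s = int (sum_list (take s c)) - int s"

definition short_parts :: "nat list \<Rightarrow> nat" where
  "short_parts c = length (filter (\<lambda>m. m = 1) c)"

definition long_parts :: "nat list \<Rightarrow> nat" where
  "long_parts c = length (filter (\<lambda>m. 2 \<le> m) c)"

lemma level_0 [simp]: "level c 0 = 0"
  by (simp add: level_def)

lemma level_Suc: "s < length c \<Longrightarrow> level c (Suc s) = level c s + int (c ! s) - 1"
  by (simp add: level_def take_Suc_conv_app_nth)

lemma level_length: "level c (length c) = int (sum_list c) - int (length c)"
  by (simp add: level_def)

lemma level_append_left: "s \<le> length xs \<Longrightarrow> level (xs @ ys) s = level xs s"
  by (simp add: level_def)

lemma level_append: "level (xs @ ys) (length xs + t) = level xs (length xs) + level ys t"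
  by (simp add: level_def)

lemma level_Cons_Suc: "level (a # cs) (Suc s) = int a - 1 + level cs s"
  using level_append[of "[a]" cs s] by (simp add: level_def)

lemma level_drop:
  assumes "s \<le> length c"
  shows "level (drop s c) t = level c (s + t) - level c s"
proof -
  have "level (take s c) (length (take s c)) = level c s"
    using assms by (simp add: level_def min_absorb2)
  then show ?thesis
    using level_append[of "take s c" "drop s c" t] assms by simp
qed

lemma int_sum_list_update:
  "i < length xs \<Longrightarrow> int (sum_list (xs[i := v])) = int (sum_list xs) + int v - int (xs ! i)"
proof (induction xs arbitrary: i)
  case (Cons a xs)
  then show ?case by (cases i) auto
qed simp

lemma level_list_update:
  assumes "t < length c"
  shows "level (c[t := v]) s = level c s + (if t < s then int v - int (c ! t) else 0)"
proof (cases "t < s")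
  case True
  then have "take s (c[t := v]) = (take s c)[t := v]" and "t < length (take s c)"
    using assms by (simp_all add: take_update_swap)
  with True show ?thesis
    using int_sum_list_update[of t "take s c" v] by (simp add: level_def)
qed (simp add: level_def)

lemma int_length_filter_list_update:
  "i < length xs \<Longrightarrow> int (length (filter P (xs[i := v]))) =
     int (length (filter P xs)) - (if P (xs ! i) then 1 else 0) + (if P v then 1 else 0)"
proof (induction xs arbitrary: i)
  case (Cons a xs)
  show ?case
  proof (cases i)
    case (Suc m)
    with Cons show ?thesis by (cases "P a") simp_all
  qed simp
qed simp

lemma sum_list_excess_parts:
  "sum_list (map (\<lambda>x. x - 2) c) + short_parts c + 2 * long_parts c = sum_list c"
proof (induction c)
  case (Cons a c)
  then show ?case by (cases "a = 0"; cases "a = 1") (auto simp: short_parts_def long_parts_def)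
qed (simp add: short_parts_def long_parts_def)

lemma finite_length_sum_list: "finite {w :: nat list. length w = m \<and> sum_list w = N}"
proof (rule finite_subset)
  show "{w :: nat list. length w = m \<and> sum_list w = N} \<subseteq> {w. set w \<subseteq> {..N} \<and> length w = m}"
    by (auto dest: member_le_sum_list)
qed (rule finite_lists_length_eq, simp)

definition fine_comp :: "nat \<Rightarrow> nat list \<Rightarrow> bool" where
  "fine_comp n c \<longleftrightarrow> length c = n \<and> sum_list c = n \<and> (\<forall>s\<le>n. 0 \<le> level c s)
      \<and> (\<forall>s<n. c ! s = 1 \<longrightarrow> 1 \<le> level c s)"

definition fine_comps :: "nat \<Rightarrow> nat \<Rightarrow> nat \<Rightarrow> nat list set" where
  "fine_comps n j k = {c. fine_comp n c \<and> short_parts c = j \<and> long_parts c = k}"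

lemma finite_fine_comps: "finite (fine_comps n j k)"
  by (rule finite_subset[OF _ finite_length_sum_list[of n n]]) (auto simp: fine_comps_def fine_comp_def)

lemma fine_comps_empty: "n < j + 2 * k \<Longrightarrow> fine_comps n j k = {}"
proof (rule ccontr)
  assume "n < j + 2 * k" and "fine_comps n j k \<noteq> {}"
  then obtain c where "sum_list c = n" "short_parts c = j" "long_parts c = k"
    by (auto simp: fine_comps_def fine_comp_def)
  with sum_list_excess_parts[of c] \<open>n < j + 2 * k\<close> show False by linarith
qed

section \<open>Dyck paths of compositions\<close>

(* The height of comp_path c after its s-th downstep is level c s. *)

fun comp_path :: "nat list \<Rightarrow> bool list" where
  "comp_path [] = []"
| "comp_path (c # cs) = replicate c True @ False # comp_path cs"

lemma length_takeWhile_replicate [simp]: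
  "length (takeWhile id (replicate m True @ False # r)) = m"
  by (induction m) auto

lemma dropWhile_replicate [simp]: "dropWhile id (replicate m True @ False # r) = False # r"
  by (induction m) auto

lemma inj_comp_path: "inj comp_path"
proof (rule injI)
  show "comp_path a = comp_path b \<Longrightarrow> a = b" for a b
  proof (induction a arbitrary: b)
    case Nil
    then show ?case by (cases b) auto
  next
    case (Cons x xs)
    then obtain y ys where b: "b = y # ys"
      by (cases b) auto
    with Cons.prems have eq: "replicate x True @ False # comp_path xs = replicate y True @ False # comp_path ys"
      by simp
    then have "x = y"
      by (metis length_takeWhile_replicate)
    moreover from eq have "comp_path xs = comp_path ys"
      by (metis dropWhile_replicate list.inject)
    ultimately show ?case
      using Cons.IH b by simp
  qed
qed

lemma ex_comp_path: "xs = [] \<or> \<not> last xs \<Longrightarrow> \<exists>c. xs = comp_path c"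
proof (induction xs)
  case Nil
  show ?case by (metis comp_path.simps(1))
next
  case (Cons x xs)
  show ?case
  proof (cases x)
    case True
    with Cons.prems have "xs \<noteq> []" and "\<not> last xs"
      by (auto split: if_splits)
    with Cons.IH obtain c where c: "xs = comp_path c"
      by blast
    with \<open>xs \<noteq> []\<close> obtain a cs where "c = a # cs"
      by (cases c) auto
    with c True have "x # xs = comp_path (Suc a # cs)"
      by simp
    then show ?thesis by blast
  next
    case False
    from Cons.prems have "xs = [] \<or> \<not> last xs"
      by (cases xs) auto
    with Cons.IH obtain c where "xs = comp_path c"
      by blast
    with False have "x # xs = comp_path (0 # c)"
      by simp
    then show ?thesis by blast
  qed
qed

lemma comp_path_counts:
  "length (filter id (comp_path c)) = sum_list c"
  "length (filter Not (comp_path c)) = length c"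
  "length (comp_path c) = sum_list c + length c"
  by (induction c) auto

lemma height_Nil [simp]: "height [] = 0"
  by (simp add: height_def)

lemma height_Cons [simp]: "height (x # xs) = (if x then 1 else -1) + height xs"
  by (simp add: height_def)

lemma height_comp_path: "height (comp_path c) = int (sum_list c) - int (length c)"
  by (simp add: height_def comp_path_counts)

lemma ascents_replicate:
  "ascents (replicate m True @ False # r) = (if m = 0 then [] else [m]) @ ascents r"
  by (cases m) simp_all

lemma ascents_comp_path: "ascents (comp_path c) = filter (\<lambda>x. x \<noteq> 0) c"
  by (induction c) (auto simp: ascents_replicate)

lemma short_ascents_comp_path: "short_ascents (comp_path c) = short_parts c"
  unfolding short_ascents_def short_parts_def ascents_comp_path filter_filter
  by (metis (mono_tags, lifting) filter_cong zero_neq_one)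

lemma long_ascents_comp_path: "long_ascents (comp_path c) = long_parts c"
  unfolding long_ascents_def long_parts_def ascents_comp_path filter_filter
  by (rule arg_cong[where f = length], rule filter_cong) auto

definition nonneg_from :: "int \<Rightarrow> bool list \<Rightarrow> bool" where
  "nonneg_from h xs \<longleftrightarrow> (\<forall>i \<le> length xs. 0 \<le> h + height (take i xs))"

definition hill_from :: "int \<Rightarrow> bool list \<Rightarrow> bool" where
  "hill_from h xs \<longleftrightarrow>
     (\<exists>i. Suc i < length xs \<and> xs ! i \<and> \<not> xs ! Suc i \<and> h + height (take (Suc i) xs) = 1)"

lemma all_le_Suc_iff: "(\<forall>i \<le> Suc m. P i) \<longleftrightarrow> P 0 \<and> (\<forall>i \<le> m. P (Suc i))"
  by (metis Suc_le_mono le0 not0_implies_Suc)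

lemma ex_nat_iff: "(\<exists>i :: nat. P i) \<longleftrightarrow> P 0 \<or> (\<exists>i. P (Suc i))"
  by (metis not0_implies_Suc)

lemma nonneg_from_Nil [simp]: "nonneg_from h [] \<longleftrightarrow> 0 \<le> h"
  by (simp add: nonneg_from_def)

lemma nonneg_from_Cons:
  "nonneg_from h (x # xs) \<longleftrightarrow> 0 \<le> h \<and> nonneg_from (h + (if x then 1 else -1)) xs"
  unfolding nonneg_from_def by (simp only: length_Cons all_le_Suc_iff) (simp add: algebra_simps)

lemma nonneg_from_replicate:
  "nonneg_from h (replicate m True @ r) \<longleftrightarrow> 0 \<le> h \<and> nonneg_from (h + int m) r"
proof (induction m arbitrary: h)
  case 0
  then show ?case by (cases r) (auto simp: nonneg_from_Cons)
next
  case (Suc m)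
  then show ?case by (auto simp: nonneg_from_Cons algebra_simps)
qed

lemma nonneg_from_comp_path:
  "nonneg_from h (comp_path c) \<longleftrightarrow> (\<forall>s \<le> length c. 0 \<le> h + level c s)"
proof (induction c arbitrary: h)
  case (Cons a cs)
  have "nonneg_from h (comp_path (a # cs)) \<longleftrightarrow> 0 \<le> h \<and> nonneg_from (h + int a - 1) (comp_path cs)"
    by (auto simp: nonneg_from_replicate nonneg_from_Cons algebra_simps)
  also have "\<dots> \<longleftrightarrow> 0 \<le> h \<and> (\<forall>s \<le> length cs. 0 \<le> h + int a - 1 + level cs s)"
    using Cons.IH by simp
  also have "\<dots> \<longleftrightarrow> (\<forall>s \<le> length (a # cs). 0 \<le> h + level (a # cs) s)"
    by (simp only: length_Cons all_le_Suc_iff) (simp add: level_Cons_Suc algebra_simps)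
  finally show ?case .
qed simp

lemma hill_from_Nil [simp]: "\<not> hill_from h []"
  by (simp add: hill_from_def)

lemma hill_from_Cons:
  "hill_from h (x # xs) \<longleftrightarrow>
     (x \<and> xs \<noteq> [] \<and> \<not> hd xs \<and> h = 0) \<or> hill_from (h + (if x then 1 else -1)) xs"
proof -
  have "hill_from h (x # xs) \<longleftrightarrow>
      (Suc 0 < length (x # xs) \<and> x \<and> \<not> (x # xs) ! Suc 0 \<and> h + height [x] = 1)
      \<or> (\<exists>i. Suc (Suc i) < length (x # xs) \<and> (x # xs) ! Suc i \<and> \<not> (x # xs) ! Suc (Suc i)
            \<and> h + height (take (Suc (Suc i)) (x # xs)) = 1)"
    unfolding hill_from_def by (subst ex_nat_iff) simp
  also have "\<dots> \<longleftrightarrow> (x \<and> xs \<noteq> [] \<and> \<not> hd xs \<and> h = 0) \<or> hill_from (h + (if x then 1 else -1)) xs"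
    unfolding hill_from_def by (cases xs) (auto simp: algebra_simps)
  finally show ?thesis .
qed

lemma hill_from_replicate:
  "hill_from h (replicate m True @ False # r) \<longleftrightarrow>
     (1 \<le> m \<and> h + int m = 1) \<or> hill_from (h + int m - 1) r"
proof (induction m arbitrary: h)
  case 0
  then show ?case by (simp add: hill_from_Cons)
next
  case (Suc m)
  have "hill_from h (replicate (Suc m) True @ False # r) \<longleftrightarrow>
        (m = 0 \<and> h = 0) \<or> hill_from (h + 1) (replicate m True @ False # r)"
    by (cases m) (simp_all add: hill_from_Cons)
  also have "\<dots> \<longleftrightarrow> (1 \<le> Suc m \<and> h + int (Suc m) = 1) \<or> hill_from (h + int (Suc m) - 1) r"
    using Suc.IH[of "h + 1"] by (cases m) (auto simp: algebra_simps)
  finally show ?case .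
qed

lemma hill_from_comp_path:
  "hill_from h (comp_path c) \<longleftrightarrow> (\<exists>s < length c. 1 \<le> c ! s \<and> h + level c s + int (c ! s) = 1)"
proof (induction c arbitrary: h)
  case (Cons a cs)
  have "hill_from h (comp_path (a # cs)) \<longleftrightarrow>
      (1 \<le> a \<and> h + int a = 1) \<or> hill_from (h + int a - 1) (comp_path cs)"
    by (simp add: hill_from_replicate)
  also have "\<dots> \<longleftrightarrow> (1 \<le> a \<and> h + int a = 1) \<or>
      (\<exists>s < length cs. 1 \<le> cs ! s \<and> h + int a - 1 + level cs s + int (cs ! s) = 1)"
    using Cons.IH by simp
  also have "\<dots> \<longleftrightarrow>
      (\<exists>s < length (a # cs). 1 \<le> (a # cs) ! s \<and> h + level (a # cs) s + int ((a # cs) ! s) = 1)"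
    by (simp only: length_Cons Ex_less_Suc2) (simp add: level_Cons_Suc algebra_simps)
  finally show ?case .
qed simp

lemma dyck_path_comp_path:
  "dyck_path n (comp_path c) \<longleftrightarrow> length c = n \<and> sum_list c = n \<and> (\<forall>s \<le> n. 0 \<le> level c s)"
proof -
  have "dyck_path n (comp_path c) \<longleftrightarrow> length (comp_path c) = 2 * n
      \<and> length (filter id (comp_path c)) = n \<and> nonneg_from 0 (comp_path c) \<and> height (comp_path c) = 0"
    by (simp add: dyck_path_def nonneg_from_def)
  then show ?thesis
    by (auto simp: comp_path_counts height_comp_path nonneg_from_comp_path)
qed

lemma has_hill_comp_path:
  assumes "\<forall>s \<le> length c. 0 \<le> level c s"
  shows "has_hill (comp_path c) \<longleftrightarrow> (\<exists>s < length c. c ! s = 1 \<and> level c s = 0)"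
proof -
  have "has_hill (comp_path c) \<longleftrightarrow> hill_from 0 (comp_path c)"
    by (simp add: has_hill_def hill_from_def)
  also have "\<dots> \<longleftrightarrow> (\<exists>s < length c. c ! s = 1 \<and> level c s = 0)"
  proof -
    have "1 \<le> c ! s \<and> level c s + int (c ! s) = 1 \<longleftrightarrow> c ! s = 1 \<and> level c s = 0"
      if "s < length c" for s
      using assms[rule_format, of s] that by auto
    then show ?thesis
      unfolding hill_from_comp_path by auto
  qed
  finally show ?thesis .
qed

lemma fine_path_comp_path: "fine_path n (comp_path c) \<longleftrightarrow> fine_comp n c"
proof -
  have "(\<forall>s<n. c ! s = 1 \<longrightarrow> 1 \<le> level c s) \<longleftrightarrow> \<not> (\<exists>s<n. c ! s = 1 \<and> level c s = 0)"
    if "\<forall>s \<le> n. 0 \<le> level c s"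
  proof -
    have "1 \<le> level c s \<longleftrightarrow> level c s \<noteq> 0" if "s < n" for s
      using \<open>\<forall>s \<le> n. 0 \<le> level c s\<close>[rule_format, of s] that by auto
    then show ?thesis
      by auto
  qed
  then show ?thesis
    by (auto simp: fine_path_def fine_comp_def dyck_path_comp_path has_hill_comp_path)
qed

lemma dyck_path_last:
  assumes "dyck_path n xs"
  shows "xs = [] \<or> \<not> last xs"
proof (rule ccontr)
  assume "\<not> (xs = [] \<or> \<not> last xs)"
  then obtain ys where ys: "xs = ys @ [True]"
    by (metis append_butlast_last_id)
  moreover have "0 \<le> height (take (length xs - 1) xs)" and "height xs = 0"
    using assms by (simp_all add: dyck_path_def)
  ultimately show False
    by (simp add: height_def)
qed

lemma fine_paths_eq_image:
  "{xs. fine_path n xs \<and> short_ascents xs = j \<and> long_ascents xs = k} = comp_path ` fine_comps n j k"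
proof
  show "comp_path ` fine_comps n j k \<subseteq> {xs. fine_path n xs \<and> short_ascents xs = j \<and> long_ascents xs = k}"
    by (auto simp: fine_comps_def fine_path_comp_path short_ascents_comp_path long_ascents_comp_path)
next
  show "{xs. fine_path n xs \<and> short_ascents xs = j \<and> long_ascents xs = k} \<subseteq> comp_path ` fine_comps n j k"
  proof
    fix xs
    assume xs: "xs \<in> {xs. fine_path n xs \<and> short_ascents xs = j \<and> long_ascents xs = k}"
    then have "dyck_path n xs"
      by (simp add: fine_path_def)
    then obtain c where "xs = comp_path c"
      using dyck_path_last ex_comp_path by blast
    with xs show "xs \<in> comp_path ` fine_comps n j k"
      by (auto simp: fine_comps_def fine_path_comp_path short_ascents_comp_path long_ascents_comp_path)
  qed
qed

lemma card_fine_paths: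
  "card {xs. fine_path n xs \<and> short_ascents xs = j \<and> long_ascents xs = k} = card (fine_comps n j k)"
  unfolding fine_paths_eq_image using inj_comp_path by (simp add: card_image inj_on_subset)

section \<open>Trading a part 1 for an excess unit\<close>

definition merge_at :: "nat list \<Rightarrow> nat \<Rightarrow> nat \<Rightarrow> nat list" where
  "merge_at c t i = c[i := 0, t := Suc (c ! t)]"

definition split_at :: "nat list \<Rightarrow> nat \<Rightarrow> nat \<Rightarrow> nat list" where
  "split_at c t i = c[t := c ! t - 1, i := 1]"

lemma length_merge_at [simp]: "length (merge_at c t i) = length c"
  by (simp add: merge_at_def)

lemma length_split_at [simp]: "length (split_at c t i) = length c"
  by (simp add: split_at_def)

lemma nth_merge_at:
  "t < length c \<Longrightarrow> i < length c \<Longrightarrow> t \<noteq> i \<Longrightarrow>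
    merge_at c t i ! s = (if s = t then Suc (c ! t) else if s = i then 0 else c ! s)"
  by (simp add: merge_at_def nth_list_update)

lemma nth_split_at:
  "t < length c \<Longrightarrow> i < length c \<Longrightarrow> t \<noteq> i \<Longrightarrow>
    split_at c t i ! s = (if s = i then 1 else if s = t then c ! t - 1 else c ! s)"
  by (simp add: split_at_def nth_list_update)

lemma split_merge_at:
  assumes "t < length c" "i < length c" "t \<noteq> i" "c ! i = 1"
  shows "split_at (merge_at c t i) t i = c"
  using assms by (intro nth_equalityI) (auto simp: split_at_def nth_merge_at nth_list_update)

lemma merge_split_at:
  assumes "t < length c" "i < length c" "t \<noteq> i" "c ! i = 0" "1 \<le> c ! t"
  shows "merge_at (split_at c t i) t i = c"
  using assms by (intro nth_equalityI) (auto simp: merge_at_def nth_split_at nth_list_update)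

lemma level_merge_at:
  assumes "t < i" "i < length c" "c ! i = 1"
  shows "level (merge_at c t i) s = level c s + (if t < s \<and> s \<le> i then 1 else 0)"
  using assms by (simp add: merge_at_def level_list_update)

lemma level_split_at:
  assumes "t < i" "i < length c" "c ! i = 0" "1 \<le> c ! t"
  shows "level (split_at c t i) s = level c s - (if t < s \<and> s \<le> i then 1 else 0)"
proof -
  have "level c s = level (split_at c t i) s + (if t < s \<and> s \<le> i then 1 else 0)"
    using level_merge_at[of t i "split_at c t i" s] merge_split_at[of t c i] assms
    by (simp add: nth_split_at)
  then show ?thesis by simp
qed

lemma parts_merge_at:
  assumes "t < length c" "i < length c" "t \<noteq> i" "c ! i = 1" "2 \<le> c ! t"
  shows "short_parts (merge_at c t i) + 1 = short_parts c"
    and "long_parts (merge_at c t i) = long_parts c"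
proof -
  have "t < length (c[i := 0])"
    using assms by simp
  note update = int_length_filter_list_update[OF this, of _ "Suc (c ! t)"]
    int_length_filter_list_update[OF assms(2), of _ 0]
  show "short_parts (merge_at c t i) + 1 = short_parts c"
    using update[of "\<lambda>m. m = 1"] assms by (simp add: merge_at_def short_parts_def)
  show "long_parts (merge_at c t i) = long_parts c"
    using update[of "\<lambda>m. 2 \<le> m"] assms by (simp add: merge_at_def long_parts_def)
qed

lemma parts_split_at:
  assumes "t < length c" "i < length c" "t \<noteq> i" "c ! i = 0" "3 \<le> c ! t"
  shows "short_parts (split_at c t i) = short_parts c + 1"
    and "long_parts (split_at c t i) = long_parts c"
  using parts_merge_at[of t "split_at c t i" i] merge_split_at[of t c i] assms
  by (simp_all add: nth_split_at)

lemma fine_comp_merge_at: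
  assumes c: "fine_comp n c" and "t < i" "i < n" "c ! i = 1" "2 \<le> c ! t"
  shows "fine_comp n (merge_at c t i)"
proof -
  have len: "length c = n"
    using c by (simp add: fine_comp_def)
  note lvl = level_merge_at[OF \<open>t < i\<close>, of c] \<open>i < n\<close> \<open>c ! i = 1\<close>
  have "level (merge_at c t i) n = level c n"
    using lvl len by simp
  then have "sum_list (merge_at c t i) = n"
    using c level_length[of c] level_length[of "merge_at c t i"] by (simp add: fine_comp_def)
  moreover have "c ! s = 1" if "merge_at c t i ! s = 1" for s
    using that assms len by (auto simp: nth_merge_at split: if_splits)
  ultimately show ?thesis
    using c lvl len by (fastforce simp: fine_comp_def)
qed

lemma fine_comp_split_at:
  assumes c: "fine_comp n c" and "t < i" "i < n" "c ! i = 0" "3 \<le> c ! t"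
    and high: "\<And>s. t < s \<Longrightarrow> s \<le> i \<Longrightarrow> 2 \<le> level c s"
  shows "fine_comp n (split_at c t i)"
proof -
  have len: "length c = n"
    using c by (simp add: fine_comp_def)
  have lvl: "level (split_at c t i) s = level c s - (if t < s \<and> s \<le> i then 1 else 0)" for s
    using level_split_at assms len by simp
  have "sum_list (split_at c t i) = n"
    using c lvl[of n] \<open>i < n\<close> level_length[of c] level_length[of "split_at c t i"] len
    by (simp add: fine_comp_def)
  moreover have "1 \<le> level (split_at c t i) s" if "t < s" "s \<le> i" for s
    using lvl[of s] high[OF that] that by simp
  moreover have "c ! s = 1" if "split_at c t i ! s = 1" "\<not> (t < s \<and> s \<le> i)" for s
    using that assms len by (auto simp: nth_split_at split: if_splits)
  ultimately show ?thesis
    using c lvl len by (fastforce simp: fine_comp_def)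
qed

(* Moving the part 1 at i (of level g) onto the last earlier part t of level < g raises the levels
   in (t, i] by one; p = g - level t + 2 lies in [3, c'_t], and release_one recovers i as the first
   place after t where the level drops below g + 1 = level t + p - 1. *)

definition absorb_target :: "nat list \<Rightarrow> nat \<Rightarrow> nat" where
  "absorb_target c i = Max {s. s < i \<and> level c s < level c i}"

definition absorb_one :: "nat list \<Rightarrow> nat \<Rightarrow> nat list \<times> nat \<times> nat" where
  "absorb_one c i = (let t = absorb_target c i
     in (merge_at c t i, t, nat (level c i - level c t + 2)))"

definition release_target :: "nat list \<Rightarrow> nat \<Rightarrow> nat \<Rightarrow> nat" where
  "release_target c t p = (LEAST s. t < s \<and> level c (Suc s) < level c t + int p - 1)"

definition release_one :: "nat list \<Rightarrow> nat \<Rightarrow> nat \<Rightarrow> nat list \<times> nat" where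
  "release_one c t p = (let i = release_target c t p in (split_at c t i, i))"

definition marked_ones :: "nat \<Rightarrow> nat \<Rightarrow> nat \<Rightarrow> (nat list \<times> nat) set" where
  "marked_ones n j k = {(c, i). c \<in> fine_comps n j k \<and> i < n \<and> c ! i = 1}"

definition marked_excess :: "nat \<Rightarrow> nat \<Rightarrow> nat \<Rightarrow> (nat list \<times> nat \<times> nat) set" where
  "marked_excess n j k = {(c, t, p). c \<in> fine_comps n j k \<and> t < n \<and> 3 \<le> p \<and> p \<le> c ! t}"

lemma absorb_target:
  assumes c: "fine_comp n c" and i: "i < n" "c ! i = 1"
  defines "t \<equiv> absorb_target c i"
  shows "t < i" and "level c t < level c i"
    and "\<And>s. t < s \<Longrightarrow> s \<le> i \<Longrightarrow> level c i \<le> level c s"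
    and "level c i - level c t + 1 \<le> int (c ! t)"
proof -
  let ?T = "{s. s < i \<and> level c s < level c i}"
  have "1 \<le> level c i"
    using c i by (simp add: fine_comp_def)
  then have "0 \<in> ?T"
    by (cases i) auto
  then have "t \<in> ?T"
    unfolding t_def absorb_target_def by (intro Max_in) auto
  then show "t < i" and "level c t < level c i"
    by auto
  show above: "level c i \<le> level c s" if "t < s" "s \<le> i" for s
  proof (rule ccontr)
    assume "\<not> level c i \<le> level c s"
    with that have "s \<in> ?T"
      by (cases "s = i") auto
    then have "s \<le> t"
      unfolding t_def absorb_target_def by (intro Max_ge) auto
    with that show False
      by simp
  qed
  have "level c (Suc t) = level c t + int (c ! t) - 1"
    using c \<open>t < i\<close> i by (simp add: fine_comp_def level_Suc)
  with above[of "Suc t"] \<open>t < i\<close> show "level c i - level c t + 1 \<le> int (c ! t)"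
    by simp
qed

lemma release_target:
  assumes c: "fine_comp n c" and t: "t < n" and p: "3 \<le> p" "p \<le> c ! t"
  defines "i \<equiv> release_target c t p" and "l \<equiv> level c t + int p - 1"
  shows "t < i" and "i < n" and "c ! i = 0" and "level c i = l" and "2 \<le> l"
    and "\<And>s. t < s \<Longrightarrow> s \<le> i \<Longrightarrow> l \<le> level c s"
proof -
  have len: "length c = n" and "level c n = 0" and "0 \<le> level c t"
    using c t level_length[of c] by (auto simp: fine_comp_def)
  then show "2 \<le> l"
    using p by (simp add: l_def)
  have step: "level c (Suc s) = level c s + int (c ! s) - 1" if "s < n" for s
    using len that by (simp add: level_Suc)
  have "Suc t \<noteq> n"
    using step[OF t] \<open>level c n = 0\<close> \<open>0 \<le> level c t\<close> p by auto
  then have ex: "t < n - 1 \<and> level c (Suc (n - 1)) < l"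
    using t \<open>level c n = 0\<close> \<open>2 \<le> l\<close> by simp
  have least: "t < i \<and> level c (Suc i) < l"
    unfolding i_def release_target_def l_def[symmetric] by (rule LeastI[of "\<lambda>s. t < s \<and> level c (Suc s) < l", OF ex])
  then show "t < i"
    by simp
  have "i \<le> n - 1"
    unfolding i_def release_target_def l_def[symmetric] by (rule Least_le[of "\<lambda>s. t < s \<and> level c (Suc s) < l", OF ex])
  with \<open>Suc t \<noteq> n\<close> t show "i < n"
    by simp
  show above: "l \<le> level c s" if "t < s" "s \<le> i" for s
  proof (cases s)
    case (Suc s')
    show ?thesis
    proof (cases "s' = t")
      case True
      then show ?thesis using Suc step[OF t] p by (simp add: l_def)
    next
      case False
      with that Suc have "s' < i" and "t < s'"
        by auto
      from \<open>s' < i\<close> have "\<not> (t < s' \<and> level c (Suc s') < l)"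
        unfolding i_def release_target_def l_def[symmetric] by (rule not_less_Least)
      with \<open>t < s'\<close> Suc show ?thesis
        by simp
    qed
  qed (use that in simp)
  from above[of i] least step[OF \<open>i < n\<close>] show "c ! i = 0" and "level c i = l"
    by auto
qed

lemma absorb_one_in_marked_excess:
  assumes "(c, i) \<in> marked_ones n (Suc j) k"
  shows "absorb_one c i \<in> marked_excess n j k"
proof -
  have c: "fine_comp n c" and i: "i < n" "c ! i = 1"
    and parts: "short_parts c = Suc j" "long_parts c = k"
    using assms by (auto simp: marked_ones_def fine_comps_def)
  have len: "length c = n"
    using c by (simp add: fine_comp_def)
  define t where "t = absorb_target c i"
  note target = absorb_target[OF c i, folded t_def]
  have "2 \<le> c ! t"
    using target by linarith
  then have "fine_comp n (merge_at c t i)" and "short_parts (merge_at c t i) = j"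
    and "long_parts (merge_at c t i) = k"
    using fine_comp_merge_at[OF c target(1) i] parts_merge_at[of t c i] target(1) i len parts
    by auto
  moreover have "3 \<le> nat (level c i - level c t + 2)"
    and "nat (level c i - level c t + 2) \<le> merge_at c t i ! t"
    using target len i by (auto simp: nth_merge_at)
  ultimately show ?thesis
    using target(1) i
    by (simp add: absorb_one_def t_def[symmetric] marked_excess_def fine_comps_def)
qed

lemma release_absorb_one:
  assumes "(c, i) \<in> marked_ones n j k" and "absorb_one c i = (c', t, p)"
  shows "release_one c' t p = (c, i)"
proof -
  have c: "fine_comp n c" and i: "i < n" "c ! i = 1"
    using assms(1) by (auto simp: marked_ones_def fine_comps_def)
  have len: "length c = n"
    using c by (simp add: fine_comp_def)
  have t: "t = absorb_target c i" and c': "c' = merge_at c t i"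
    and p: "p = nat (level c i - level c t + 2)"
    using assms(2) by (auto simp: absorb_one_def Let_def)
  note target = absorb_target[OF c i, folded t]
  have lvl: "level c' s = level c s + (if t < s \<and> s \<le> i then 1 else 0)" for s
    using level_merge_at target(1) i len c' by simp
  have "level c' t + int p - 1 = level c i + 1"
    using lvl[of t] target p by simp
  moreover have "(LEAST s. t < s \<and> level c' (Suc s) < level c i + 1) = i"
  proof (rule Least_equality)
    show "t < i \<and> level c' (Suc i) < level c i + 1"
      using lvl[of "Suc i"] level_Suc[of i c] target(1) i len by simp
  next
    fix s
    assume s: "t < s \<and> level c' (Suc s) < level c i + 1"
    show "i \<le> s"
    proof (rule ccontr)
      assume "\<not> i \<le> s"
      with s have "level c i \<le> level c (Suc s)" and "level c' (Suc s) = level c (Suc s) + 1"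
        using target(3)[of "Suc s"] lvl[of "Suc s"] by auto
      with s show False
        by simp
    qed
  qed
  ultimately have "release_target c' t p = i"
    unfolding release_target_def by metis
  then show ?thesis
    using split_merge_at[of t c i] target(1) i len c' by (simp add: release_one_def)
qed

lemma release_one_in_marked_ones:
  assumes "(c, t, p) \<in> marked_excess n j k"
  shows "release_one c t p \<in> marked_ones n (Suc j) k"
proof -
  have c: "fine_comp n c" and t: "t < n" and p: "3 \<le> p" "p \<le> c ! t"
    and parts: "short_parts c = j" "long_parts c = k"
    using assms by (auto simp: marked_excess_def fine_comps_def)
  have len: "length c = n"
    using c by (simp add: fine_comp_def)
  define i where "i = release_target c t p"
  note target = release_target[OF c t p, folded i_def]
  have "fine_comp n (split_at c t i)"
    using fine_comp_split_at[OF c target(1-3)] p target(5,6) by fastforce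
  moreover have "short_parts (split_at c t i) = Suc j" and "long_parts (split_at c t i) = k"
    using parts_split_at[of t c i] target(1-3) t p len parts by auto
  moreover have "split_at c t i ! i = 1"
    using target(1,2) len by (simp add: nth_split_at)
  ultimately show ?thesis
    using target(2) by (simp add: release_one_def i_def[symmetric] marked_ones_def fine_comps_def)
qed

lemma absorb_release_one:
  assumes "(c, t, p) \<in> marked_excess n j k" and "release_one c t p = (d, i)"
  shows "absorb_one d i = (c, t, p)"
proof -
  have c: "fine_comp n c" and t: "t < n" and p: "3 \<le> p" "p \<le> c ! t"
    using assms(1) by (auto simp: marked_excess_def fine_comps_def)
  have len: "length c = n"
    using c by (simp add: fine_comp_def)
  have i: "i = release_target c t p" and d: "d = split_at c t i"
    using assms(2) by (auto simp: release_one_def Let_def)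
  note target = release_target[OF c t p, folded i]
  have lvl: "level d s = level c s - (if t < s \<and> s \<le> i then 1 else 0)" for s
    using level_split_at[of t i c s] target(1-3) p len d by simp
  have "absorb_target d i = t"
    unfolding absorb_target_def
  proof (rule Max_eqI)
    show "t \<in> {s. s < i \<and> level d s < level d i}"
      using lvl[of t] lvl[of i] target p by simp
  next
    fix s
    assume s: "s \<in> {s. s < i \<and> level d s < level d i}"
    show "s \<le> t"
    proof (rule ccontr)
      assume "\<not> s \<le> t"
      with s have "level d s = level c s - 1" and "level c t + int p - 1 \<le> level c s"
        using lvl[of s] target(6)[of s] by auto
      with s lvl[of i] target(1,4) show False
        by simp
    qed
  qed simp
  moreover have "nat (level d i - level d t + 2) = p"
    using lvl[of i] lvl[of t] target by simp
  moreover have "merge_at d t i = c"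
    using merge_split_at[of t c i] target(1-3) t p len d by simp
  ultimately show ?thesis
    by (simp add: absorb_one_def)
qed

lemma bij_betw_absorb_one:
  "bij_betw (\<lambda>(c, i). absorb_one c i) (marked_ones n (Suc j) k) (marked_excess n j k)"
proof (rule bij_betw_byWitness[where f' = "\<lambda>(c, t, p). release_one c t p"])
  show "\<forall>a \<in> marked_ones n (Suc j) k. (\<lambda>(c, t, p). release_one c t p) ((\<lambda>(c, i). absorb_one c i) a) = a"
    using release_absorb_one by (auto split: prod.splits)
  show "\<forall>a \<in> marked_excess n j k. (\<lambda>(c, i). absorb_one c i) ((\<lambda>(c, t, p). release_one c t p) a) = a"
    using absorb_release_one by (auto split: prod.splits)
  show "(\<lambda>(c, i). absorb_one c i) ` marked_ones n (Suc j) k \<subseteq> marked_excess n j k"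
    using absorb_one_in_marked_excess by auto
  show "(\<lambda>(c, t, p). release_one c t p) ` marked_excess n j k \<subseteq> marked_ones n (Suc j) k"
    using release_one_in_marked_ones by auto
qed

lemma card_marked_ones: "card (marked_ones n j k) = j * card (fine_comps n j k)"
proof -
  have "marked_ones n j k = Sigma (fine_comps n j k) (\<lambda>c. {i. i < n \<and> c ! i = 1})"
    by (auto simp: marked_ones_def)
  then have "card (marked_ones n j k) = (\<Sum>c \<in> fine_comps n j k. card {i. i < n \<and> c ! i = 1})"
    by (simp add: card_SigmaI finite_fine_comps)
  also have "\<dots> = (\<Sum>c \<in> fine_comps n j k. j)"
  proof (rule sum.cong)
    fix c
    assume "c \<in> fine_comps n j k"
    then have "length c = n" and "short_parts c = j"
      by (auto simp: fine_comps_def fine_comp_def)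
    then show "card {i. i < n \<and> c ! i = 1} = j"
      by (simp add: short_parts_def length_filter_conv_card)
  qed simp
  finally show ?thesis
    by simp
qed

lemma card_marked_excess:
  "card (marked_excess n j k) = card (fine_comps n j k) * (n - j - 2 * k)"
proof -
  have "marked_excess n j k = Sigma (fine_comps n j k) (\<lambda>c. Sigma {..<n} (\<lambda>t. {3..c ! t}))"
    by (auto simp: marked_excess_def)
  then have "card (marked_excess n j k) = (\<Sum>c \<in> fine_comps n j k. \<Sum>t<n. c ! t - 2)"
    by (simp add: card_SigmaI finite_fine_comps)
  also have "\<dots> = (\<Sum>c \<in> fine_comps n j k. n - j - 2 * k)"
  proof (rule sum.cong)
    fix c
    assume "c \<in> fine_comps n j k"
    then have "length c = n" and "sum_list c = n" and "short_parts c = j" and "long_parts c = k"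
      by (auto simp: fine_comps_def fine_comp_def)
    then show "(\<Sum>t<n. c ! t - 2) = n - j - 2 * k"
      using sum_list_excess_parts[of c] by (simp add: sum_list_sum_nth atLeast0LessThan)
  qed simp
  finally show ?thesis
    by simp
qed

lemma card_fine_comps:
  "card (fine_comps n j k) = card (fine_comps n 0 k) * ((n - 2 * k) choose j)"
proof (induction j)
  case (Suc j)
  let ?m = "n - 2 * k"
  have "Suc j * card (fine_comps n (Suc j) k) = card (fine_comps n j k) * (n - j - 2 * k)"
    using card_marked_ones[of n "Suc j" k] card_marked_excess[of n j k]
      bij_betw_same_card[OF bij_betw_absorb_one[of n j k]] by simp
  also have "\<dots> = card (fine_comps n 0 k) * ((?m - j) * (?m choose j))"
    using Suc.IH by (simp add: add.commute)
  also have "(?m - j) * (?m choose j) = Suc j * (?m choose Suc j)"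
    using binomial_absorb_comp[of ?m j] binomial_absorption[of j ?m] by simp
  finally have "Suc j * card (fine_comps n (Suc j) k) =
      Suc j * (card (fine_comps n 0 k) * (?m choose Suc j))"
    by (simp only: mult.left_commute)
  then show ?case
    by (simp only: mult_cancel1) simp
qed simp

section \<open>The cycle lemma\<close>

definition lukasiewicz :: "nat \<Rightarrow> nat list \<Rightarrow> bool" where
  "lukasiewicz n w \<longleftrightarrow> length w = Suc n \<and> sum_list w = n \<and> (\<forall>s \<le> n. 0 \<le> level w s)"

lemma inj_rotate: "inj (rotate r)"
  by (simp add: rotate_def bij_is_inj bij_rotate1)

lemma rotate_eq_drop_take: "r \<le> length w \<Longrightarrow> rotate r w = drop r w @ take r w"
  by (cases "r = length w") (simp_all add: rotate_drop_take)

lemma sum_list_rotate: "sum_list (rotate r w) = sum_list (w :: 'a :: comm_monoid_add list)"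
  by (metis add.commute append_take_drop_id rotate_drop_take sum_list_append)

lemma length_filter_rotate: "length (filter P (rotate r w)) = length (filter P w)"
  by (metis add.commute append_take_drop_id filter_append length_append rotate_drop_take)

lemma level_rotate_head:
  assumes "s \<le> length u" "t \<le> length u - s"
  shows "level (rotate s u) t = level u (s + t) - level u s"
  using assms by (simp add: rotate_eq_drop_take level_append_left level_drop)

lemma level_rotate_tail:
  assumes "t \<le> s" "s \<le> length u"
  shows "level (rotate s u) (length u - s + t) = level u (length u) - level u s + level u t"
proof -
  have "level (take s u) t = level u t"
    using assms by (simp add: level_def min_absorb2)
  then show ?thesis
    using assms level_append[of "drop s u" "take s u" t] level_drop[of s u "length u - s"]
    by (simp add: rotate_eq_drop_take)
qed

lemma level_lukasiewicz_end: "lukasiewicz n w \<Longrightarrow> level w (Suc n) = -1"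
  using level_length[of w] by (simp add: lukasiewicz_def)

lemma not_lukasiewicz_rotate:
  assumes w: "lukasiewicz n w" and r: "0 < r" "r \<le> n"
  shows "\<not> lukasiewicz n (rotate r w)"
proof
  assume "lukasiewicz n (rotate r w)"
  then have "0 \<le> level (rotate r w) (Suc n - r)"
    using r by (simp add: lukasiewicz_def)
  moreover have "level (rotate r w) (Suc n - r) = -1 - level w r"
    using level_rotate_head[of r w "Suc n - r"] level_lukasiewicz_end[OF w] w r
    by (simp add: lukasiewicz_def)
  moreover have "0 \<le> level w r"
    using w r by (simp add: lukasiewicz_def)
  ultimately show False
    by simp
qed

lemma lukasiewicz_rotate_unique:
  assumes "lukasiewicz n (rotate s u)" "lukasiewicz n (rotate s' u)" "s \<le> n" "s' \<le> n"
  shows "s = s'"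
proof -
  have "\<not> lukasiewicz n (rotate s' u)" if "lukasiewicz n (rotate s u)" "s < s'" "s' \<le> n" for s s'
    using not_lukasiewicz_rotate[OF that(1), of "s' - s"] that by (simp add: rotate_rotate)
  with assms show ?thesis
    by (metis linorder_neqE_nat)
qed

lemma lukasiewicz_rotate_first_min:
  assumes len: "length u = Suc n" and sum: "sum_list u = n" and "s \<le> n"
    and min: "\<And>t. t \<le> n \<Longrightarrow> level u s \<le> level u t"
    and first: "\<And>t. t < s \<Longrightarrow> level u s < level u t"
  shows "lukasiewicz n (rotate s u)"
proof -
  have last: "level u (Suc n) = -1"
    using len sum level_length[of u] by simp
  have "0 \<le> level (rotate s u) t" if "t \<le> n" for t
  proof (cases "t \<le> Suc n - s")
    case head: True
    have rot: "level (rotate s u) t = level u (s + t) - level u s"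
      using level_rotate_head[of s u t] head \<open>s \<le> n\<close> len by simp
    show ?thesis
    proof (cases "s + t \<le> n")
      case True
      then show ?thesis
        using rot min[of "s + t"] by simp
    next
      case False
      then have "s + t = Suc n"
        using head \<open>s \<le> n\<close> by simp
      moreover from this have "0 < s"
        using \<open>t \<le> n\<close> by simp
      ultimately show ?thesis
        using rot last first[of 0] by simp
    qed
  next
    case False
    define t' where "t' = t - (Suc n - s)"
    have "t = Suc n - s + t'" and "t' < s"
      using False \<open>t \<le> n\<close> \<open>s \<le> n\<close> by (simp_all add: t'_def)
    with level_rotate_tail[of t' s u] first[of t'] \<open>s \<le> n\<close> len last show ?thesis
      by simp
  qed
  then show ?thesis
    using len sum by (simp add: lukasiewicz_def sum_list_rotate)
qed

lemma ex_lukasiewicz_rotate: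
  assumes "length u = Suc n" and "sum_list u = n"
  shows "\<exists>s \<le> n. lukasiewicz n (rotate s u)"
proof -
  define m where "m = Min (level u ` {..n})"
  have min: "m \<le> level u t" if "t \<le> n" for t
    unfolding m_def using that by simp
  have "m \<in> level u ` {..n}"
    unfolding m_def by (rule Min_in) auto
  then have ex: "\<exists>s. s \<le> n \<and> level u s = m"
    by auto
  define s where "s = (LEAST s. s \<le> n \<and> level u s = m)"
  have s: "s \<le> n" "level u s = m"
    using LeastI_ex[OF ex] by (simp_all add: s_def)
  have "m < level u t" if "t < s" for t
    using not_less_Least[of t "\<lambda>s. s \<le> n \<and> level u s = m"] that s min[of t]
    unfolding s_def by fastforce
  with s min assms show ?thesis
    using lukasiewicz_rotate_first_min[of u n s] by auto
qed

theorem card_lukasiewicz_rotations: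
  assumes "length u = Suc n" and "sum_list u = n"
  shows "card {s \<in> {..n}. lukasiewicz n (rotate s u)} = 1"
proof -
  obtain s where s: "s \<le> n" "lukasiewicz n (rotate s u)"
    using ex_lukasiewicz_rotate[OF assms] by blast
  moreover have "s' = s" if "s' \<le> n" "lukasiewicz n (rotate s' u)" for s'
    using lukasiewicz_rotate_unique[of n s' u s] that s by blast
  ultimately have "{s \<in> {..n}. lukasiewicz n (rotate s u)} = {s}"
    by blast
  then show ?thesis
    by simp
qed

lemma card_filter_eq_sum_if: "finite X \<Longrightarrow> card {x \<in> X. P x} = (\<Sum>x\<in>X. if P x then 1 else 0)"
  by (simp add: sum.If_cases Int_def)

lemma card_rotate_preimage:
  assumes "s \<le> n" and "A \<subseteq> {w. length w = Suc n}" and "B \<subseteq> {w. length w = Suc n}"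
    and "\<And>u. rotate s u \<in> A \<Longrightarrow> u \<in> B"
  shows "card {u \<in> B. rotate s u \<in> A} = card A"
proof -
  have "rotate s ` {u \<in> B. rotate s u \<in> A} = A"
  proof (intro equalityI subsetI)
    fix w
    assume "w \<in> A"
    then have "rotate s (rotate (Suc n - s) w) = w"
      using assms(1,2) by (auto simp: rotate_rotate simp del: rotate_Suc)
    with \<open>w \<in> A\<close> assms(4) show "w \<in> rotate s ` {u \<in> B. rotate s u \<in> A}"
      by (metis (mono_tags, lifting) image_eqI mem_Collect_eq)
  qed auto
  moreover have "inj_on (rotate s) {u \<in> B. rotate s u \<in> A}"
    using inj_rotate by (rule inj_on_subset) simp
  ultimately show ?thesis
    using card_image by metis
qed

theorem cycle_lemma:
  assumes Q: "\<And>r w. Q (rotate r w) \<longleftrightarrow> Q w"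
  shows "card {w. length w = Suc n \<and> sum_list w = n \<and> Q w} = Suc n * card {w. lukasiewicz n w \<and> Q w}"
proof -
  define A where "A = {w. lukasiewicz n w \<and> Q w}"
  define B where "B = {w. length w = Suc n \<and> sum_list w = n \<and> Q w}"
  have "finite B"
    unfolding B_def by (rule finite_subset[OF _ finite_length_sum_list[of "Suc n" n]]) auto
  have in_B: "u \<in> B" if "rotate s u \<in> A" for s u
    using that Q[of s u] by (simp add: A_def B_def lukasiewicz_def sum_list_rotate)
  have lengths: "A \<subseteq> {w. length w = Suc n}" "B \<subseteq> {w. length w = Suc n}"
    by (auto simp: A_def B_def lukasiewicz_def)
  have "card {s \<in> {..n}. rotate s u \<in> A} = 1" if "u \<in> B" for u
  proof -
    have "{s \<in> {..n}. rotate s u \<in> A} = {s \<in> {..n}. lukasiewicz n (rotate s u)}"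
      using that Q[of _ u] by (auto simp: A_def B_def)
    with that show ?thesis
      using card_lukasiewicz_rotations[of u n] by (simp add: B_def)
  qed
  then have "card B = (\<Sum>u\<in>B. card {s \<in> {..n}. rotate s u \<in> A})"
    by simp
  also have "\<dots> = (\<Sum>u\<in>B. \<Sum>s\<le>n. if rotate s u \<in> A then 1 else 0)"
    by (rule sum.cong[OF refl], rule card_filter_eq_sum_if) simp
  also have "\<dots> = (\<Sum>s\<le>n. \<Sum>u\<in>B. if rotate s u \<in> A then 1 else 0)"
    by (rule sum.swap)
  also have "\<dots> = (\<Sum>s\<le>n. card A)"
  proof (rule sum.cong[OF refl])
    fix s
    assume "s \<in> {..n}"
    then have "card {u \<in> B. rotate s u \<in> A} = card A"
      using lengths in_B by (intro card_rotate_preimage) auto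
    then show "(\<Sum>u\<in>B. if rotate s u \<in> A then 1 else 0) = card A"
      using \<open>finite B\<close> card_filter_eq_sum_if by metis
  qed
  finally show ?thesis
    by (simp add: A_def B_def)
qed

section \<open>Compositions without parts 1\<close>

lemma finite_lists_filter_eq: "finite {w. length w = N \<and> filter (\<lambda>x. x \<noteq> z) w = v}"
proof (rule finite_subset)
  show "{w. length w = N \<and> filter (\<lambda>x. x \<noteq> z) w = v} \<subseteq> {w. set w \<subseteq> insert z (set v) \<and> length w = N}"
    by auto
qed (rule finite_lists_length_eq, simp)

lemma card_lists_filter_eq:
  "z \<notin> set v \<Longrightarrow> card {w. length w = N \<and> filter (\<lambda>x. x \<noteq> z) w = v} = N choose length v"
proof (induction N arbitrary: v)
  case 0
  then show ?case
    by (cases v) (auto simp: Collect_conv_if)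
next
  case (Suc N)
  let ?S = "\<lambda>v. {w. length w = N \<and> filter (\<lambda>x. x \<noteq> z) w = v}"
  show ?case
  proof (cases v)
    case Nil
    have "{w. length w = Suc N \<and> filter (\<lambda>x. x \<noteq> z) w = v} = Cons z ` ?S v"
      using Nil by (fastforce simp: length_Suc_conv image_iff split: if_splits)
    then show ?thesis
      using Suc Nil by (simp add: card_image)
  next
    case (Cons a v')
    with Suc.prems have "a \<noteq> z" and "z \<notin> set v'"
      by auto
    then have "{w. length w = Suc N \<and> filter (\<lambda>x. x \<noteq> z) w = v} = Cons z ` ?S v \<union> Cons a ` ?S v'"
      using Cons by (fastforce simp: length_Suc_conv image_iff split: if_splits)
    moreover have "Cons z ` ?S v \<inter> Cons a ` ?S v' = {}"
      using \<open>a \<noteq> z\<close> by auto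
    ultimately show ?thesis
      using Suc Cons \<open>z \<notin> set v'\<close>
      by (simp add: card_Un_disjoint finite_lists_filter_eq card_image)
  qed
qed

lemma card_lists_filter_in:
  assumes "finite V" and "\<And>v. v \<in> V \<Longrightarrow> length v = k \<and> z \<notin> set v"
  shows "card {w. length w = N \<and> filter (\<lambda>x. x \<noteq> z) w \<in> V} = card V * (N choose k)"
proof -
  have "{w. length w = N \<and> filter (\<lambda>x. x \<noteq> z) w \<in> V} =
      (\<Union>v\<in>V. {w. length w = N \<and> filter (\<lambda>x. x \<noteq> z) w = v})"
    by auto
  also have "card \<dots> = (\<Sum>v\<in>V. card {w. length w = N \<and> filter (\<lambda>x. x \<noteq> z) w = v})"
    using assms(1) finite_lists_filter_eq by (intro card_UN_disjoint) auto
  also have "\<dots> = (\<Sum>v\<in>V. N choose k)"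
    using assms(2) by (simp add: card_lists_filter_eq)
  finally show ?thesis
    by simp
qed

definition long_comps :: "nat \<Rightarrow> nat \<Rightarrow> nat list set" where
  "long_comps n k = {v. length v = k \<and> (\<forall>x \<in> set v. 2 \<le> x) \<and> sum_list v = n}"

lemma finite_long_comps: "finite (long_comps n k)"
  by (rule finite_subset[OF _ finite_length_sum_list[of k n]]) (auto simp: long_comps_def)

lemma card_long_comps:
  assumes "1 \<le> k" "2 * k \<le> n"
  shows "card (long_comps n k) = (n - k - 1) choose (k - 1)"
proof -
  have shift: "sum_list (map (\<lambda>x. x + 2) u) = sum_list u + 2 * length u" for u :: "nat list"
    by (induction u) auto
  have "long_comps n k = map (\<lambda>x. x + 2) ` {u. length u = k \<and> sum_list u = n - 2 * k}"
  proof (intro equalityI subsetI)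
    fix v
    assume v: "v \<in> long_comps n k"
    then have "v = map (\<lambda>x. x + 2) (map (\<lambda>x. x - 2) v)"
      by (auto simp: long_comps_def intro!: map_idI[symmetric])
    moreover have "map (\<lambda>x. x - 2) v \<in> {u. length u = k \<and> sum_list u = n - 2 * k}"
      using v shift[of "map (\<lambda>x. x - 2) v"] calculation by (auto simp: long_comps_def)
    ultimately show "v \<in> map (\<lambda>x. x + 2) ` {u. length u = k \<and> sum_list u = n - 2 * k}"
      by (rule image_eqI)
  qed (use assms shift in \<open>auto simp: long_comps_def\<close>)
  moreover have "inj (map (\<lambda>x :: nat. x + 2))"
    by (rule inj_mapI) (simp add: inj_def)
  ultimately have "card (long_comps n k) = card {u :: nat list. length u = k \<and> sum_list u = n - 2 * k}"
    by (metis card_image inj_on_subset subset_UNIV)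
  also have "\<dots> = (n - k - 1) choose (n - 2 * k)"
    using assms by (simp add: card_length_sum_list)
  also have "\<dots> = (n - k - 1) choose (k - 1)"
    using assms binomial_symmetric[of "n - 2 * k" "n - k - 1"] by simp
  finally show ?thesis .
qed

lemma short_parts_eq_0_iff: "short_parts c = 0 \<longleftrightarrow> (\<forall>x \<in> set c. x \<noteq> 1)"
  by (simp add: short_parts_def filter_empty_conv)

lemma short_free_iff_long_comps:
  "sum_list w = n \<and> short_parts w = 0 \<and> long_parts w = k \<longleftrightarrow>
     filter (\<lambda>x. x \<noteq> 0) w \<in> long_comps n k"
proof -
  have sum: "sum_list (filter (\<lambda>x. x \<noteq> 0) w) = sum_list w"
    by (induction w) auto
  have "(\<forall>x \<in> set (filter (\<lambda>x. x \<noteq> 0) w). 2 \<le> x) \<longleftrightarrow> (\<forall>x \<in> set w. x \<noteq> 1)"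
    by (auto simp: less_2_cases_iff not_le)
  moreover have "filter (\<lambda>x. x \<noteq> 0) w = filter (\<lambda>m. 2 \<le> m) w" if "\<forall>x \<in> set w. x \<noteq> 1"
    using that by (intro filter_cong) auto
  ultimately show ?thesis
    using sum by (auto simp: long_comps_def short_parts_eq_0_iff long_parts_def)
qed

lemma card_short_free:
  "card {w. length w = Suc n \<and> sum_list w = n \<and> short_parts w = 0 \<and> long_parts w = k} =
     card (long_comps n k) * (Suc n choose k)"
proof -
  have "{w. length w = Suc n \<and> sum_list w = n \<and> short_parts w = 0 \<and> long_parts w = k} =
      {w. length w = Suc n \<and> filter (\<lambda>x. x \<noteq> 0) w \<in> long_comps n k}"
    using short_free_iff_long_comps by blast
  also have "card \<dots> = card (long_comps n k) * (Suc n choose k)"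
    by (rule card_lists_filter_in[OF finite_long_comps]) (auto simp: long_comps_def)
  finally show ?thesis .
qed

lemma lukasiewicz_snoc_0:
  "lukasiewicz n (c @ [0]) \<longleftrightarrow> length c = n \<and> sum_list c = n \<and> (\<forall>s \<le> n. 0 \<le> level c s)"
  by (auto simp: lukasiewicz_def level_append_left)

lemma lukasiewicz_last:
  assumes "lukasiewicz n w"
  shows "\<exists>c. w = c @ [0]"
proof -
  have len: "length w = Suc n" and "sum_list w = n" and "0 \<le> level w n"
    using assms by (auto simp: lukasiewicz_def)
  then have "w = take n w @ [w ! n]" and "n \<le> sum_list (take n w)"
    by (auto simp: level_def take_Suc_conv_app_nth[symmetric])
  with \<open>sum_list w = n\<close> have "w ! n = 0"
    by (metis add_le_same_cancel1 le_zero_eq sum_list.Cons sum_list.Nil sum_list_append add_0_right)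
  with \<open>w = take n w @ [w ! n]\<close> show ?thesis
    by metis
qed

lemma card_fine_comps_0_eq:
  "card (fine_comps n 0 k) = card {w. lukasiewicz n w \<and> short_parts w = 0 \<and> long_parts w = k}"
proof -
  have fine_iff: "fine_comp n c \<and> short_parts c = 0 \<longleftrightarrow> lukasiewicz n (c @ [0]) \<and> short_parts c = 0"
    for c
    by (auto simp: fine_comp_def lukasiewicz_snoc_0 short_parts_eq_0_iff dest: nth_mem)
  have parts: "short_parts (c @ [0]) = short_parts c" "long_parts (c @ [0]) = long_parts c" for c
    by (simp_all add: short_parts_def long_parts_def)
  have "{w. lukasiewicz n w \<and> short_parts w = 0 \<and> long_parts w = k} = (\<lambda>c. c @ [0]) ` fine_comps n 0 k"
  proof (intro equalityI subsetI)
    fix w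
    assume w: "w \<in> {w. lukasiewicz n w \<and> short_parts w = 0 \<and> long_parts w = k}"
    then obtain c where "w = c @ [0]"
      using lukasiewicz_last by blast
    with w show "w \<in> (\<lambda>c. c @ [0]) ` fine_comps n 0 k"
      using fine_iff parts by (auto simp: fine_comps_def)
  qed (use fine_iff parts in \<open>auto simp: fine_comps_def\<close>)
  then show ?thesis
    by (simp add: card_image inj_on_def)
qed

lemma card_fine_comps_0:
  assumes "1 \<le> k" "2 * k \<le> n"
  shows "Suc n * card (fine_comps n 0 k) = ((n - k - 1) choose (k - 1)) * (Suc n choose k)"
proof -
  have "Suc n * card (fine_comps n 0 k) =
      Suc n * card {w. lukasiewicz n w \<and> (short_parts w = 0 \<and> long_parts w = k)}"
    by (simp add: card_fine_comps_0_eq)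
  also have "\<dots> = card {w. length w = Suc n \<and> sum_list w = n \<and> (short_parts w = 0 \<and> long_parts w = k)}"
    by (rule cycle_lemma[symmetric]) (simp add: short_parts_def long_parts_def length_filter_rotate)
  also have "\<dots> = card (long_comps n k) * (Suc n choose k)"
    using card_short_free by simp
  finally show ?thesis
    using card_long_comps[OF assms] by simp
qed

lemma ibinom_of_nat: "ibinom (int a) (int b) = a choose b"
  by (simp add: ibinom_def binomial_eq_0)

theorem mainTheorem4:
  fixes n k j :: nat
  assumes "n \<ge> 2" and "k \<ge> 1"
  shows "real (card {xs. fine_path n xs \<and> short_ascents xs = j \<and> long_ascents xs = k})
    = 1 / real (n + 1) * real (ibinom (int n - 1 - int k) (int k - 1))
        * real (ibinom (int n - 2 * int k) (int j)) * real (ibinom (int n + 1) (int k))"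
proof (cases "2 * k \<le> n")
  case True
  then have "int n - 1 - int k = int (n - k - 1)" and "int k - 1 = int (k - 1)"
    and "int n - 2 * int k = int (n - 2 * k)" and "int n + 1 = int (Suc n)"
    using assms(2) by auto
  then have binoms: "ibinom (int n - 1 - int k) (int k - 1) = (n - k - 1) choose (k - 1)"
    "ibinom (int n - 2 * int k) (int j) = (n - 2 * k) choose j"
    "ibinom (int n + 1) (int k) = Suc n choose k"
    by (simp_all only: ibinom_of_nat)
  have "real (card (fine_comps n 0 k)) =
      real ((n - k - 1) choose (k - 1)) * real (Suc n choose k) / real (Suc n)"
    using card_fine_comps_0[OF assms(2) True] by (simp add: field_simps flip: of_nat_mult)
  then show ?thesis
    unfolding card_fine_paths card_fine_comps[of n j k] binoms by simp
next
  case False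
  then have "ibinom (int n - 2 * int k) (int j) = 0"
    by (simp add: ibinom_def)
  moreover have "fine_comps n j k = {}"
    using False by (intro fine_comps_empty) simp
  ultimately show ?thesis
    by (simp add: card_fine_paths)
qed

end
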